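(* Let $V$ be a polynomial of degree $d\ge2$, let $1\le j\ne k\le d$, and let $\Gamma\in\mathcal T_{j,k}$ be a contour with $\mathcal E_V(\Gamma)=\sup_{\Gamma'\in\mathcal T_{j,k}}\mathcal E_V(\Gamma')$. Let $\mu_\Gamma$ be the equilibrium measure of $\Gamma$ in the external field $\Re V$, and let $$Q(z)=\left(\frac12V'(z)-\int\frac{d\mu_\Gamma(s)}{z-s}\right)^2,\qquad z\in\mathbb C\setminus\operatorname{supp}\mu_\Gamma,$$ which is (the restriction of) a polynomial of degree $2d-2$. Then every zero of $Q$ of odd multiplicity lies in $\operatorname{supp}\mu_\Gamma$.
   Context: $S_1,\dots,S_d$ are the $d$ sectors of opening $\pi/d$ in which $\Re V(z)\to+\infty$, numbered counterclockwise; $\mathcal T_{j,k}$ is the set of contours starting at infinity in $S_j$ and ending at infinity in $S_k$. For a probability measure $\nu$, $E_V(\nu)=\iint\log\frac1{|s-t|}d\nu(s)d\nu(t)+\int\Re V\,d\nu$; $\mathcal E_V(\Gamma)=\inf\{E_V(\nu):\nu \text{ Borel probability measure on }\Gamma\}$, and the equilibrium measure $\mu_\Gamma$ is the unique minimizer. That $Q$ is a polynomial of degree $2d-2$ for such a maximizing $\Gamma$ is a known result used as a standing fact. *)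

theory Defs
  imports "HOL-Probability.Probability" "HOL-Computational_Algebra.Polynomial"
begin

(* The d sectors of opening pi/d in which Re V(z) -> +infinity, numbered counterclockwise.
   With V(z) = a z^d + ..., Re V -> +inf along the ray arg z = phi iff cos(Arg a + d phi) > 0.
   Sector m (1 <= m <= d) is the open sector centred at phi_m = (2 pi (m-1) - Arg a)/d. *)
definition sector_centre :: "complex poly \<Rightarrow> nat \<Rightarrow> real" where
  "sector_centre V m = (2 * pi * (real m - 1) - Arg (lead_coeff V)) / real (degree V)"

definition sector :: "complex poly \<Rightarrow> nat \<Rightarrow> complex set" where
  "sector V m = {z. z \<noteq> 0 \<and> (\<exists>\<phi>. z = of_real (cmod z) * cis \<phi> \<and>
       \<bar>\<phi> - sector_centre V m\<bar> < pi / (2 * real (degree V)))}"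

definition contour :: "(real \<Rightarrow> complex) \<Rightarrow> bool" where
  "contour \<gamma> \<longleftrightarrow> inj \<gamma> \<and> continuous_on UNIV \<gamma> \<and>
     (\<forall>a b. a < b \<longrightarrow> \<gamma> piecewise_C1_differentiable_on {a..b}) \<and>
     filterlim \<gamma> at_infinity at_bot \<and> filterlim \<gamma> at_infinity at_top"

definition contours_T :: "complex poly \<Rightarrow> nat \<Rightarrow> nat \<Rightarrow> (real \<Rightarrow> complex) set" where
  "contours_T V j k = {\<gamma>. contour \<gamma> \<and>
      (\<forall>\<^sub>F t in at_bot. \<gamma> t \<in> sector V j) \<and> (\<forall>\<^sub>F t in at_top. \<gamma> t \<in> sector V k)}"

definition borel_prob_on :: "complex set \<Rightarrow> complex measure \<Rightarrow> bool" where
  "borel_prob_on S \<nu> \<longleftrightarrow> prob_space \<nu> \<and> sets \<nu> = sets borel \<and> emeasure \<nu> (UNIV - S) = 0"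

definition energy_kernel :: "complex poly \<Rightarrow> complex \<Rightarrow> complex \<Rightarrow> ereal" where
  "energy_kernel V s t = (if s = t then \<infinity>
      else ereal (ln (1 / cmod (s - t)) + (Re (poly V s) + Re (poly V t)) / 2))"

(* E_V(nu) = \<integral>\<integral> log 1/|s-t| d nu d nu + \<integral> Re V d nu, written as the extended integral
   of the kernel above (positive part minus negative part) *)
definition energy :: "complex poly \<Rightarrow> complex measure \<Rightarrow> ereal" where
  "energy V \<nu> =
     enn2ereal (\<integral>\<^sup>+ p. e2ennreal (energy_kernel V (fst p) (snd p)) \<partial>(\<nu> \<Otimes>\<^sub>M \<nu>))
   - enn2ereal (\<integral>\<^sup>+ p. e2ennreal (- energy_kernel V (fst p) (snd p)) \<partial>(\<nu> \<Otimes>\<^sub>M \<nu>))"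

definition curve_energy :: "complex poly \<Rightarrow> complex set \<Rightarrow> ereal" where
  "curve_energy V \<Gamma> = (INF \<nu> \<in> {\<nu>. borel_prob_on \<Gamma> \<nu>}. energy V \<nu>)"

definition measure_support :: "complex measure \<Rightarrow> complex set" where
  "measure_support \<mu> = {z. \<forall>e>0. emeasure \<mu> (ball z e) > 0}"

end

theory Submission
  imports Defs "HOL-Complex_Analysis.Complex_Analysis"
begin

text \<open>Off the support of \<open>\<mu>\<close> the Cauchy transform \<open>z \<mapsto> \<integral> d\<mu>(s) / (z - s)\<close> is holomorphic:
  near such a point the kernel is bounded away from the support, so one may differentiate under
  the integral sign. Hence near a zero \<open>z\<^sub>0 \<notin> supp \<mu>\<close> of \<open>Q\<close> we have \<open>Q = G\<^sup>2\<close> with \<open>G\<close> holomorphic,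
  and the multiplicity of \<open>z\<^sub>0\<close>, being its analytic order as a zero of \<open>Q\<close>, is twice the order of
  \<open>G\<close> at \<open>z\<^sub>0\<close>, hence even. Extremality of the contour enters only through \<open>Q\<close> being a polynomial,
  which is a hypothesis here.\<close>

lemma null_ball_if_notin_measure_support:
  assumes "z \<notin> measure_support M"
  obtains r where "0 < r" and "emeasure M (ball z r) = 0"
  using assms by (auto simp: measure_support_def)

lemma null_ball_subset_Compl_measure_support:
  assumes "sets M = sets borel" and "emeasure M (ball z r) = 0"
  shows "ball z r \<subseteq> - measure_support M"
proof
  fix w assume "w \<in> ball z r"
  have "dist z t < r" if "dist w t < r - dist z w" for t
    using dist_triangle[of z t w] that by linarith
  with \<open>w \<in> ball z r\<close> have "ball w (r - dist z w) \<subseteq> ball z r" and "0 < r - dist z w"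
    by auto
  then have "emeasure M (ball w (r - dist z w)) = 0"
    using assms emeasure_mono[of "ball w (r - dist z w)" "ball z r" M] by simp
  with \<open>0 < r - dist z w\<close> show "w \<in> - measure_support M"
    by (auto simp: measure_support_def intro!: exI[of _ "r - dist z w"])
qed

lemma open_Compl_measure_support:
  assumes "sets M = sets borel"
  shows "open (- measure_support M)"
proof (rule openI)
  fix z assume "z \<in> - measure_support M"
  then obtain r where "0 < r" and "emeasure M (ball z r) = 0"
    by (auto elim: null_ball_if_notin_measure_support)
  with null_ball_subset_Compl_measure_support[OF assms] show "\<exists>e>0. ball z e \<subseteq> - measure_support M"
    by blast
qed

lemma AE_norm_diff_ge_if_null_ball:
  fixes M :: "complex measure"
  assumes "sets M = sets borel" and "emeasure M (ball w r) = 0"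
  shows "AE s in M. r - dist w z \<le> norm (z - s)"
proof (rule AE_I'[of "ball w r"])
  show "ball w r \<in> null_sets M"
    using assms by (simp add: null_sets_def)
  have "dist w s < r" if "norm (z - s) < r - dist w z" for s
    using dist_triangle[of w s z] that by (simp add: dist_norm)
  then show "{s \<in> space M. \<not> r - dist w z \<le> norm (z - s)} \<subseteq> ball w r"
    by auto
qed

lemma (in finite_measure) norm_integral_le_AE_bound:
  fixes f :: "'a \<Rightarrow> 'b::{banach,second_countable_topology}"
  assumes bound: "AE x in M. norm (f x) \<le> B" and [measurable]: "f \<in> borel_measurable M"
  shows "norm (\<integral>x. f x \<partial>M) \<le> B * measure M (space M)"
proof -
  have "integrable M f"
    by (rule integrable_const_bound[OF bound]) simp
  then have "norm (\<integral>x. f x \<partial>M) \<le> (\<integral>x. B \<partial>M)"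
    by (intro order_trans[OF integral_norm_bound] integral_mono_AE bound) auto
  then show ?thesis
    by (simp add: mult.commute)
qed

lemma norm_inverse_power_le:
  fixes a :: "'a::real_normed_field"
  assumes "0 < \<delta>" and "\<delta> \<le> norm a"
  shows "norm (1 / a ^ n) \<le> 1 / \<delta> ^ n"
  using assms by (simp add: norm_divide norm_power frac_le power_mono)

lemma inverse_difference_quotient_remainder:
  fixes a b :: "'a::field"
  assumes "a \<noteq> 0" and "b \<noteq> 0" and "a \<noteq> b"
  shows "(1 / a - 1 / b) / (a - b) + 1 / b ^ 2 = (a - b) * (1 / (a * b ^ 2))"
  using assms by (simp add: field_simps power2_eq_square)

lemma cauchy_transform_difference_quotient:
  fixes M :: "complex measure"
  assumes "finite_measure M" and sets: "sets M = sets borel" and "0 < \<delta>" and "z \<noteq> w"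
    and z_far: "AE s in M. \<delta> \<le> norm (z - s)" and w_far: "AE s in M. \<delta> \<le> norm (w - s)"
  shows "norm (((\<integral>s. 1 / (z - s) \<partial>M) - (\<integral>s. 1 / (w - s) \<partial>M)) / (z - w)
              + (\<integral>s. 1 / (w - s) ^ 2 \<partial>M)) \<le> measure M (space M) / \<delta> ^ 3 * norm (z - w)"
proof -
  interpret finite_measure M by fact
  have [measurable_cong]: "sets M = sets borel" by (fact sets)
  have bound: "AE s in M. norm (1 / (a - s) ^ n) \<le> 1 / \<delta> ^ n"
    if "AE s in M. \<delta> \<le> norm (a - s)" for a n
    using that by eventually_elim (rule norm_inverse_power_le[OF \<open>0 < \<delta>\<close>])
  have int: "integrable M (\<lambda>s. 1 / (a - s) ^ n)"
    if "AE s in M. \<delta> \<le> norm (a - s)" for a n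
    by (rule integrable_const_bound[OF bound[OF that]]) measurable
  have int1: "integrable M (\<lambda>s. 1 / (a - s))" if "AE s in M. \<delta> \<le> norm (a - s)" for a
    using int[OF that, of 1] by simp
  have remainder_bound: "AE s in M. norm (1 / ((z - s) * (w - s) ^ 2)) \<le> 1 / \<delta> ^ 3"
    using bound[OF z_far, of 1] bound[OF w_far, of 2]
  proof eventually_elim
    case (elim s)
    then have "norm (1 / (z - s)) * norm (1 / (w - s) ^ 2) \<le> 1 / \<delta> * (1 / \<delta> ^ 2)"
      using \<open>0 < \<delta>\<close> by (intro mult_mono) auto
    then show ?case
      by (simp add: norm_mult norm_divide power3_eq_cube power2_eq_square)
  qed
  have "AE s in M. (1 / (z - s) - 1 / (w - s)) / (z - w) + 1 / (w - s) ^ 2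
                   = (z - w) * (1 / ((z - s) * (w - s) ^ 2))"
    using z_far w_far
  proof eventually_elim
    case (elim s)
    then have "z - s \<noteq> 0" "w - s \<noteq> 0"
      using \<open>0 < \<delta>\<close> by auto
    then show ?case
      using inverse_difference_quotient_remainder[of "z - s" "w - s"] \<open>z \<noteq> w\<close> by simp
  qed
  then have "(\<integral>s. (1 / (z - s) - 1 / (w - s)) / (z - w) + 1 / (w - s) ^ 2 \<partial>M)
             = (\<integral>s. (z - w) * (1 / ((z - s) * (w - s) ^ 2)) \<partial>M)"
    by (intro integral_cong_AE) measurable
  also have "\<dots> = (z - w) * (\<integral>s. 1 / ((z - s) * (w - s) ^ 2) \<partial>M)"
    by (rule integral_mult_right_zero)
  finally have "(\<integral>s. (1 / (z - s) - 1 / (w - s)) / (z - w) + 1 / (w - s) ^ 2 \<partial>M)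
             = (z - w) * (\<integral>s. 1 / ((z - s) * (w - s) ^ 2) \<partial>M)" .
  moreover have "(\<integral>s. (1 / (z - s) - 1 / (w - s)) / (z - w) + 1 / (w - s) ^ 2 \<partial>M)
      = ((\<integral>s. 1 / (z - s) \<partial>M) - (\<integral>s. 1 / (w - s) \<partial>M)) / (z - w) + (\<integral>s. 1 / (w - s) ^ 2 \<partial>M)"
    using int1[OF z_far] int1[OF w_far] int[OF w_far, of 2] by simp
  moreover have "norm (\<integral>s. 1 / ((z - s) * (w - s) ^ 2) \<partial>M) \<le> 1 / \<delta> ^ 3 * measure M (space M)"
    by (rule norm_integral_le_AE_bound[OF remainder_bound]) measurable
  ultimately show ?thesis
    by (simp add: norm_mult mult.commute) (metis mult_left_mono norm_ge_zero times_divide_eq_right)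
qed

lemma cauchy_transform_has_field_derivative:
  fixes M :: "complex measure"
  assumes "finite_measure M" and sets: "sets M = sets borel"
    and "0 < r" and null: "emeasure M (ball w r) = 0"
  shows "((\<lambda>z. \<integral>s. 1 / (z - s) \<partial>M) has_field_derivative - (\<integral>s. 1 / (w - s) ^ 2 \<partial>M)) (at w)"
proof -
  define F where "F z = (\<integral>s. 1 / (z - s) \<partial>M)" for z
  define C where "C = measure M (space M) / (r / 2) ^ 3"
  have far: "AE s in M. r / 2 \<le> norm (z - s)" if "z \<in> ball w (r / 2)" for z
    using AE_norm_diff_ge_if_null_ball[OF sets null, of z]
    by (rule AE_mp) (use that in \<open>auto intro!: AE_I2\<close>)
  have "eventually (\<lambda>z. z \<in> ball w (r / 2) - {w}) (at w)"
    using \<open>0 < r\<close> by (intro eventually_at_in_open) auto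
  then have "\<forall>\<^sub>F z in at w. norm ((F z - F w) / (z - w) + (\<integral>s. 1 / (w - s) ^ 2 \<partial>M)) \<le> C * norm (z - w)"
  proof (rule eventually_mono)
    fix z assume "z \<in> ball w (r / 2) - {w}"
    with \<open>0 < r\<close> show "norm ((F z - F w) / (z - w) + (\<integral>s. 1 / (w - s) ^ 2 \<partial>M)) \<le> C * norm (z - w)"
      unfolding F_def C_def
      by (intro cauchy_transform_difference_quotient[OF assms(1) sets] far) auto
  qed
  moreover have "((\<lambda>z. C * norm (z - w)) \<longlongrightarrow> 0) (at w)"
    by (auto intro!: tendsto_eq_intros)
  ultimately have "((\<lambda>z. (F z - F w) / (z - w) + (\<integral>s. 1 / (w - s) ^ 2 \<partial>M)) \<longlongrightarrow> 0) (at w)"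
    by (rule Lim_null_comparison)
  then have "((\<lambda>z. (F z - F w) / (z - w) - - (\<integral>s. 1 / (w - s) ^ 2 \<partial>M)) \<longlongrightarrow> 0) (at w)"
    by simp
  then have "((\<lambda>z. (F z - F w) / (z - w)) \<longlongrightarrow> - (\<integral>s. 1 / (w - s) ^ 2 \<partial>M)) (at w)"
    by (rule LIM_zero_cancel)
  then show ?thesis
    unfolding F_def by (simp add: has_field_derivative_iff)
qed

lemma cauchy_transform_holomorphic_on:
  fixes M :: "complex measure"
  assumes "finite_measure M" and "sets M = sets borel"
  shows "(\<lambda>z. \<integral>s. 1 / (z - s) \<partial>M) holomorphic_on - measure_support M"
  unfolding holomorphic_on_def
proof
  fix w assume "w \<in> - measure_support M"
  then obtain r where "0 < r" and "emeasure M (ball w r) = 0"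
    by (auto elim: null_ball_if_notin_measure_support)
  then show "(\<lambda>z. \<integral>s. 1 / (z - s) \<partial>M) field_differentiable at w within - measure_support M"
    using cauchy_transform_has_field_derivative[OF assms]
    by (meson field_differentiable_at_within field_differentiable_def)
qed

lemma zorder_poly:
  fixes p :: "complex poly"
  assumes "p \<noteq> 0"
  shows "zorder (poly p) z = int (order z p)"
proof -
  obtain q where p: "p = [:-z, 1:] ^ order z p * q" and "\<not> [:-z, 1:] dvd q"
    using order_decomp[OF assms] by blast
  then have "poly q z \<noteq> 0"
    by (simp add: poly_eq_0_iff_dvd)
  moreover have "poly p w = poly q w * (w - z) powi int (order z p)" if "w \<noteq> z" for w
    by (subst p) (simp add: poly_power)
  moreover have "poly q holomorphic_on UNIV"
    using poly_holomorphic_on[of "\<lambda>w. w" UNIV q] by simp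
  ultimately show ?thesis
    by (intro zorder_eqI[of UNIV z "poly q"]) simp_all
qed

lemma poly_frequently_nonzero_at:
  fixes p :: "complex poly"
  assumes "p \<noteq> 0"
  shows "frequently (\<lambda>w. poly p w \<noteq> 0) (at z)"
proof -
  have "\<not> z islimpt {w. poly p w = 0}"
    by (rule islimpt_finite[OF poly_roots_finite[OF assms]])
  then have "eventually (\<lambda>w. poly p w \<noteq> 0) (at z)"
    by (simp add: islimpt_iff_eventually)
  then show ?thesis
    by (simp add: eventually_frequently)
qed

lemma even_order_if_poly_eq_square:
  fixes p :: "complex poly" and g :: "complex \<Rightarrow> complex"
  assumes "p \<noteq> 0" and "open U" and "z \<in> U" and "g holomorphic_on U"
    and "\<And>w. w \<in> U \<Longrightarrow> poly p w = g w ^ 2"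
  shows "even (order z p)"
proof -
  have eq: "eventually (\<lambda>w. poly p w = g w ^ 2) (at z)"
    using eventually_at_in_open'[OF assms(2,3)] by (rule eventually_mono) (rule assms(5))
  have nonzero: "frequently (\<lambda>w. g w \<noteq> 0) (at z)"
    using frequently_eventually_frequently[OF poly_frequently_nonzero_at[OF assms(1)] eq]
    by (rule frequently_elim1) (metis power_zero_numeral)
  have "g analytic_on U"
    using assms(2,4) by (simp add: analytic_on_open)
  then have mero: "g meromorphic_on {z}"
    using assms(3) analytic_on_subset analytic_on_imp_meromorphic_on by blast
  have "int (order z p) = zorder (poly p) z"
    by (rule zorder_poly[OF assms(1), symmetric])
  also have "\<dots> = zorder (\<lambda>w. g w ^ 2) z"
    by (rule zorder_cong[OF eq refl])
  also have "\<dots> = 2 * zorder g z"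
    using zorder_power[OF mero nonzero, of 2] by simp
  finally have "int (order z p) = 2 * zorder g z" .
  then show ?thesis
    by (metis dvd_triv_left even_of_nat)
qed

theorem lemma2p6:
  fixes V :: "complex poly" and j k :: nat and \<gamma> :: "real \<Rightarrow> complex"
    and \<mu> :: "complex measure" and Q :: "complex poly"
  assumes "degree V \<ge> 2"
    and "1 \<le> j" "j \<le> degree V" "1 \<le> k" "k \<le> degree V" "j \<noteq> k"
    and "\<gamma> \<in> contours_T V j k"
    and "curve_energy V (range \<gamma>) = (SUP \<gamma>' \<in> contours_T V j k. curve_energy V (range \<gamma>'))"
    and "borel_prob_on (range \<gamma>) \<mu>"
    and "energy V \<mu> = curve_energy V (range \<gamma>)"
    and "degree Q = 2 * degree V - 2"
    and "\<forall>z. z \<notin> measure_support \<mu> \<longrightarrow>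
           poly Q z = (poly (pderiv V) z / 2 - (\<integral>s. 1 / (z - s) \<partial>\<mu>))\<^sup>2"
  shows "\<forall>z. poly Q z = 0 \<and> odd (order z Q) \<longrightarrow> z \<in> measure_support \<mu>"
proof (intro allI impI)
  fix z assume z: "poly Q z = 0 \<and> odd (order z Q)"
  have "finite_measure \<mu>" and sets: "sets \<mu> = sets borel"
    using assms(9) by (auto simp: borel_prob_on_def prob_space.finite_measure)
  have "Q \<noteq> 0"
    using assms(1,11) by auto
  define G where "G z = poly (pderiv V) z / 2 - (\<integral>s. 1 / (z - s) \<partial>\<mu>)" for z
  have "G holomorphic_on - measure_support \<mu>"
    unfolding G_def
    by (intro holomorphic_intros cauchy_transform_holomorphic_on[OF \<open>finite_measure \<mu>\<close> sets]) simp
  show "z \<in> measure_support \<mu>"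
  proof (rule ccontr)
    assume "z \<notin> measure_support \<mu>"
    then have "even (order z Q)"
      using assms(12) by (intro even_order_if_poly_eq_square[OF \<open>Q \<noteq> 0\<close> open_Compl_measure_support[OF sets]
          _ \<open>G holomorphic_on _\<close>]) (auto simp: G_def)
    with z show False
      by simp
  qed
qed

end
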